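(* Let $\mathcal S=(\mathcal M,X,\bot)$ be a concurrent system. Then: (i) for every integer $h\ge1$, there is a bijection between executions of $\mathcal S$ of height $h$ (i.e. pairs $(\alpha,x)$ with $\alpha\in X$, $x$ of height $h$, $\alpha\cdot x\ne\bot$) and paths of length $h$ in the DSC; (ii) for every $n\ge1$, there is a bijection between executions of length $n$ and paths of length $n$ in the ADSC leading from a node of the form $(\alpha,c,1)$ to a node of the form $(\beta,d,|d|)$; (iii) for every $n\ge1$ and all states $\alpha,\beta$, there is a bijection between executions of length $n$ leading from $\alpha$ to $\beta$ and paths of length $n$ in the ADSC leading from a node of the form $(\alpha,c,1)$ to a node of the form $(\beta,d,|d|)$.
   Context: A trace monoid $\mathcal M=\mathcal M(\Sigma,I)$ is $\langle\Sigma\mid ab=ba\ ((a,b)\in I)\rangle$, $\Sigma$ finite, $I$ irreflexive symmetric; $|x|$ is length. A clique is a trace of pairwise distinct letters pairwise in $I$; $\mathfrak C$ is the set of nonempty cliques; for $c,c'\in\mathfrak C$, $c\to c'$ means every letter of $c'$ is in relation $(\Sigma\times\Sigma)\setminus I$ with some letter of $c$. Each nonempty trace $x$ has a unique normal form $x=c_1\cdots c_h$ with $c_i\in\mathfrak C$, $c_i\to c_{i+1}$; $h$ is the height of $x$. A concurrent system $(\mathcal M,X,\bot)$: $X$ finite, $\bot\notin X$, right action of $\mathcal M$ on $X\cup\{\bot\}$ with $\bot\cdot x=\bot$; an execution from $\alpha$ is a trace $x$ with $\alpha\cdot x\ne\bot$, leading from $\alpha$ to $\alpha\cdot x$. $\mathfrak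 C_\alpha=\{c\in\mathfrak C:\alpha\cdot c\ne\bot\}$. DSC: digraph with nodes $(\alpha,c)$, $\alpha\in X$, $c\in\mathfrak C_\alpha$, and an arc $(\alpha,c)\to(\beta,d)$ iff $\beta=\alpha\cdot c$ and $c\to d$. ADSC: nodes $(\alpha,c,i)$ with $(\alpha,c)$ a DSC node and $1\le i\le|c|$; arcs $(\alpha,c,i)\to(\alpha,c,i+1)$, and $(\alpha,c,|c|)\to(\beta,d,1)$ whenever $(\alpha,c)\to(\beta,d)$ is a DSC arc. A path of length $p$ is a sequence of $p$ nodes with consecutive nodes joined by arcs. *)

theory Defs
  imports Main
begin

text \<open>Alphabet Sigma = UNIV of a finite type 'a; independence I :: 'a rel.
  Traces are equivalence classes of words under commutation of adjacent
  independent letters.\<close>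

definition swap1 :: "'a rel \<Rightarrow> 'a list \<Rightarrow> 'a list \<Rightarrow> bool" where
  "swap1 I u v \<longleftrightarrow> (\<exists>p q a b. (a, b) \<in> I \<and> u = p @ a # b # q \<and> v = p @ b # a # q)"

definition teq :: "'a rel \<Rightarrow> 'a list \<Rightarrow> 'a list \<Rightarrow> bool" where
  "teq I = equivclp (swap1 I)"

definition tclass :: "'a rel \<Rightarrow> 'a list \<Rightarrow> 'a list set" where
  "tclass I w = {v. teq I w v}"

definition traces :: "'a rel \<Rightarrow> 'a list set set" where
  "traces I = range (tclass I)"

definition tconcat :: "'a rel \<Rightarrow> 'a list set list \<Rightarrow> 'a list set" where
  "tconcat I xs = tclass I (concat (map (\<lambda>x. SOME w. w \<in> x) xs))"

definition tlength :: "'a list set \<Rightarrow> nat" where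
  "tlength x = length (SOME w. w \<in> x)"

definition indep_alphabet :: "'a rel \<Rightarrow> bool" where
  "indep_alphabet I \<longleftrightarrow> irrefl I \<and> sym I"

text \<open>A clique is determined by its (finite) set of pairwise distinct, pairwise
  independent letters; we represent a clique by that set.\<close>

definition is_clique :: "'a rel \<Rightarrow> 'a set \<Rightarrow> bool" where
  "is_clique I c \<longleftrightarrow> finite c \<and> c \<noteq> {} \<and> (\<forall>a\<in>c. \<forall>b\<in>c. a \<noteq> b \<longrightarrow> (a, b) \<in> I)"

definition ctrace :: "'a rel \<Rightarrow> 'a set \<Rightarrow> 'a list set" where
  "ctrace I c = tclass I (SOME w. distinct w \<and> set w = c)"

definition clique_arrow :: "'a rel \<Rightarrow> 'a set \<Rightarrow> 'a set \<Rightarrow> bool" where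
  "clique_arrow I c c' \<longleftrightarrow> (\<forall>b\<in>c'. \<exists>a\<in>c. (a, b) \<notin> I)"

definition normal_form :: "'a rel \<Rightarrow> 'a list set \<Rightarrow> 'a set list \<Rightarrow> bool" where
  "normal_form I x cs \<longleftrightarrow> (\<forall>c\<in>set cs. is_clique I c)
     \<and> (\<forall>i. Suc i < length cs \<longrightarrow> clique_arrow I (cs ! i) (cs ! Suc i))
     \<and> x = tconcat I (map (ctrace I) cs)"

definition height :: "'a rel \<Rightarrow> 'a list set \<Rightarrow> nat" where
  "height I x = length (THE cs. normal_form I x cs)"

text \<open>States are the (finite) type 's; the sink state \<bottom> is None.  The right
  action of M on X \<union> {\<bottom>} is given by its generators, the letter action
  delta, extended to words; it is an action of the trace monoid iff it
  respects the defining relations ab = ba for (a,b) \<in> I.\<close>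

fun run :: "('a \<Rightarrow> 's \<Rightarrow> 's option) \<Rightarrow> 's \<Rightarrow> 'a list \<Rightarrow> 's option" where
  "run \<delta> \<alpha> [] = Some \<alpha>"
| "run \<delta> \<alpha> (a # w) = (case \<delta> a \<alpha> of None \<Rightarrow> None | Some \<beta> \<Rightarrow> run \<delta> \<beta> w)"

definition concurrent_system :: "'a rel \<Rightarrow> ('a \<Rightarrow> 's \<Rightarrow> 's option) \<Rightarrow> bool" where
  "concurrent_system I \<delta> \<longleftrightarrow> indep_alphabet I \<and>
     (\<forall>a b \<alpha>. (a, b) \<in> I \<longrightarrow> run \<delta> \<alpha> [a, b] = run \<delta> \<alpha> [b, a])"

definition tact :: "('a \<Rightarrow> 's \<Rightarrow> 's option) \<Rightarrow> 's \<Rightarrow> 'a list set \<Rightarrow> 's option" where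
  "tact \<delta> \<alpha> x = run \<delta> \<alpha> (SOME w. w \<in> x)"

definition cact :: "'a rel \<Rightarrow> ('a \<Rightarrow> 's \<Rightarrow> 's option) \<Rightarrow> 's \<Rightarrow> 'a set \<Rightarrow> 's option" where
  "cact I \<delta> \<alpha> c = tact \<delta> \<alpha> (ctrace I c)"

definition executions :: "'a rel \<Rightarrow> ('a \<Rightarrow> 's \<Rightarrow> 's option) \<Rightarrow> ('s \<times> 'a list set) set" where
  "executions I \<delta> = {(\<alpha>, x). x \<in> traces I \<and> tact \<delta> \<alpha> x \<noteq> None}"

definition executions_height :: "'a rel \<Rightarrow> ('a \<Rightarrow> 's \<Rightarrow> 's option) \<Rightarrow> nat \<Rightarrow> ('s \<times> 'a list set) set" where
  "executions_height I \<delta> h = {(\<alpha>, x) \<in> executions I \<delta>. height I x = h}"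

definition executions_length :: "'a rel \<Rightarrow> ('a \<Rightarrow> 's \<Rightarrow> 's option) \<Rightarrow> nat \<Rightarrow> ('s \<times> 'a list set) set" where
  "executions_length I \<delta> n = {(\<alpha>, x) \<in> executions I \<delta>. tlength x = n}"

definition executions_from_to :: "'a rel \<Rightarrow> ('a \<Rightarrow> 's \<Rightarrow> 's option) \<Rightarrow> nat \<Rightarrow> 's \<Rightarrow> 's \<Rightarrow> 'a list set set" where
  "executions_from_to I \<delta> n \<alpha> \<beta> = {x \<in> traces I. tlength x = n \<and> tact \<delta> \<alpha> x = Some \<beta>}"

definition dsc_node :: "'a rel \<Rightarrow> ('a \<Rightarrow> 's \<Rightarrow> 's option) \<Rightarrow> 's \<times> 'a set \<Rightarrow> bool" where
  "dsc_node I \<delta> v \<longleftrightarrow> (case v of (\<alpha>, c) \<Rightarrow> is_clique I c \<and> cact I \<delta> \<alpha> c \<noteq> None)"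

definition dsc_arc :: "'a rel \<Rightarrow> ('a \<Rightarrow> 's \<Rightarrow> 's option) \<Rightarrow> 's \<times> 'a set \<Rightarrow> 's \<times> 'a set \<Rightarrow> bool" where
  "dsc_arc I \<delta> v w \<longleftrightarrow> dsc_node I \<delta> v \<and> dsc_node I \<delta> w \<and>
     (case v of (\<alpha>, c) \<Rightarrow> case w of (\<beta>, d) \<Rightarrow> cact I \<delta> \<alpha> c = Some \<beta> \<and> clique_arrow I c d)"

definition adsc_node :: "'a rel \<Rightarrow> ('a \<Rightarrow> 's \<Rightarrow> 's option) \<Rightarrow> 's \<times> 'a set \<times> nat \<Rightarrow> bool" where
  "adsc_node I \<delta> v \<longleftrightarrow> (case v of (\<alpha>, c, i) \<Rightarrow> dsc_node I \<delta> (\<alpha>, c) \<and> 1 \<le> i \<and> i \<le> card c)"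

definition adsc_arc :: "'a rel \<Rightarrow> ('a \<Rightarrow> 's \<Rightarrow> 's option) \<Rightarrow> 's \<times> 'a set \<times> nat \<Rightarrow> 's \<times> 'a set \<times> nat \<Rightarrow> bool" where
  "adsc_arc I \<delta> v w \<longleftrightarrow> adsc_node I \<delta> v \<and> adsc_node I \<delta> w \<and>
     (case v of (\<alpha>, c, i) \<Rightarrow> case w of (\<beta>, d, j) \<Rightarrow>
        (\<beta> = \<alpha> \<and> d = c \<and> j = Suc i)
      \<or> (i = card c \<and> j = 1 \<and> dsc_arc I \<delta> (\<alpha>, c) (\<beta>, d)))"

definition paths :: "('v \<Rightarrow> bool) \<Rightarrow> ('v \<Rightarrow> 'v \<Rightarrow> bool) \<Rightarrow> nat \<Rightarrow> 'v list set" where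
  "paths node arc p = {vs. length vs = p \<and> (\<forall>v\<in>set vs. node v)
      \<and> (\<forall>i. Suc i < p \<longrightarrow> arc (vs ! i) (vs ! Suc i))}"

definition dsc_paths :: "'a rel \<Rightarrow> ('a \<Rightarrow> 's \<Rightarrow> 's option) \<Rightarrow> nat \<Rightarrow> ('s \<times> 'a set) list set" where
  "dsc_paths I \<delta> p = paths (dsc_node I \<delta>) (dsc_arc I \<delta>) p"

definition adsc_full_paths :: "'a rel \<Rightarrow> ('a \<Rightarrow> 's \<Rightarrow> 's option) \<Rightarrow> nat \<Rightarrow> ('s \<times> 'a set \<times> nat) list set" where
  "adsc_full_paths I \<delta> n = {vs \<in> paths (adsc_node I \<delta>) (adsc_arc I \<delta>) n.
      vs \<noteq> [] \<and> snd (snd (hd vs)) = 1 \<and> snd (snd (last vs)) = card (fst (snd (last vs)))}"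

text \<open>Those starting at state alpha whose execution ends in state beta,
  i.e. the last node (gamma,d,|d|) satisfies gamma \<cdot> d = beta.\<close>
definition adsc_full_paths_from_to :: "'a rel \<Rightarrow> ('a \<Rightarrow> 's \<Rightarrow> 's option) \<Rightarrow> nat \<Rightarrow> 's \<Rightarrow> 's \<Rightarrow> ('s \<times> 'a set \<times> nat) list set" where
  "adsc_full_paths_from_to I \<delta> n \<alpha> \<beta> = {vs \<in> adsc_full_paths I \<delta> n.
      fst (hd vs) = \<alpha> \<and> cact I \<delta> (fst (last vs)) (fst (snd (last vs))) = Some \<beta>}"

end

theory Submission
  imports Defs
begin

text \<open>
  Every trace has a unique Cartier-Foata normal form \<open>c\<^sub>1 \<cdots> c\<^sub>h\<close>: its first clique is
  the set of minimal letters of the trace (the letters it can start with), and removing that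
  clique and recursing produces the rest. Because the action respects the commutations, an
  execution \<open>(\<alpha>, x)\<close> with normal form \<open>c\<^sub>1 \<cdots> c\<^sub>h\<close> passes through the states
  \<open>\<alpha>\<^sub>1 = \<alpha>\<close>, \<open>\<alpha>\<^sub>i\<^sub>+\<^sub>1 = \<alpha>\<^sub>i \<cdot> c\<^sub>i\<close>, i.e. along the DSC path
  \<open>(\<alpha>\<^sub>1, c\<^sub>1) \<dots> (\<alpha>\<^sub>h, c\<^sub>h)\<close>; conversely, by uniqueness of the normal form the path
  determines the execution. Expanding every DSC node \<open>(\<alpha>, c)\<close> into the \<open>|c|\<close> ADSC nodes
  \<open>(\<alpha>, c, 1) \<dots> (\<alpha>, c, |c|)\<close> turns DSC paths with total clique size \<open>n\<close> bijectively
  into the ADSC paths of length \<open>n\<close> from a node \<open>(_, _, 1)\<close> to a node \<open>(_, d, |d|)\<close>;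
  fixing the first and last state gives the third bijection.
\<close>

section \<open>Trace equivalence\<close>

lemma teq_refl [simp]: "teq I u u"
  by (simp add: teq_def)

lemma teq_sym: "teq I u v \<Longrightarrow> teq I v u"
  unfolding teq_def by (rule equivclp_sym)

lemma teq_trans [trans]: "teq I u v \<Longrightarrow> teq I v w \<Longrightarrow> teq I u w"
  unfolding teq_def by (rule equivclp_trans)

lemma teq_if_swap1: "swap1 I u v \<Longrightarrow> teq I u v"
  unfolding teq_def by (rule r_into_equivclp)

lemma teq_map:
  assumes "\<And>u v. swap1 I u v \<Longrightarrow> teq J (h u) (h v)" and "teq I u v"
  shows "teq J (h u) (h v)"
  using assms(2) unfolding teq_def[of I]
proof (induction rule: equivclp_induct)
  case (step y z)
  then show ?case using assms(1) teq_sym teq_trans by metis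
qed simp

lemma teq_invariant:
  assumes "\<And>u v. swap1 I u v \<Longrightarrow> f u = f v" and "teq I u v"
  shows "f u = f v"
  using assms(2) unfolding teq_def[of I]
proof (induction rule: equivclp_induct)
  case (step y z)
  then show ?case using assms(1) by metis
qed simp

lemma swap1_append_cong: "swap1 I u v \<Longrightarrow> swap1 I (p @ u @ q) (p @ v @ q)"
  unfolding swap1_def by (metis append.assoc append_Cons)

lemma teq_append:
  assumes "teq I u u'" and "teq I v v'"
  shows "teq I (u @ v) (u' @ v')"
proof -
  have "teq I (u @ v) (u' @ v)"
  proof (rule teq_map[where h = "\<lambda>u. u @ v", OF _ assms(1)])
    fix x y assume "swap1 I x y"
    then show "teq I (x @ v) (y @ v)" using swap1_append_cong[of I x y "[]" v] teq_if_swap1 by simp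
  qed
  also have "teq I (u' @ v) (u' @ v')"
  proof (rule teq_map[where h = "\<lambda>v. u' @ v", OF _ assms(2)])
    fix x y assume "swap1 I x y"
    then show "teq I (u' @ x) (u' @ y)" using swap1_append_cong[of I x y u' "[]"] teq_if_swap1 by simp
  qed
  finally show ?thesis .
qed

lemma teq_Cons: "teq I v v' \<Longrightarrow> teq I (a # v) (a # v')"
  using teq_append[of I "[a]" "[a]" v v'] by simp

lemma teq_length: "teq I u v \<Longrightarrow> length u = length v"
  by (rule teq_invariant) (auto simp: swap1_def)

lemma teq_remove1:
  assumes "irrefl I" and "teq I u v"
  shows "teq I (remove1 a u) (remove1 a v)"
proof (rule teq_map[OF _ assms(2)])
  fix u v assume "swap1 I u v"
  then obtain p q x y where xy: "(x, y) \<in> I" "u = p @ x # y # q" "v = p @ y # x # q"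
    unfolding swap1_def by blast
  have "x \<noteq> y" using xy(1) assms(1) by (auto simp: irrefl_def)
  show "teq I (remove1 a u) (remove1 a v)"
  proof (cases "a \<in> set p")
    case True
    have "swap1 I (remove1 a p @ x # y # q) (remove1 a p @ y # x # q)"
      unfolding swap1_def using xy(1) by blast
    then show ?thesis using xy True by (simp add: remove1_append teq_if_swap1)
  next
    case False
    have "swap1 I (p @ x # y # remove1 a q) (p @ y # x # remove1 a q)"
      unfolding swap1_def using xy(1) by blast
    then show ?thesis using xy \<open>x \<noteq> y\<close> False by (auto simp: remove1_append intro!: teq_if_swap1)
  qed
qed

lemma teq_append_cancel: "irrefl I \<Longrightarrow> teq I (u @ v) (u @ v') \<Longrightarrow> teq I v v'"
proof (induction u)
  case (Cons a u)
  then show ?case using teq_remove1[OF Cons.prems, of a] by simp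
qed simp

lemma tclass_eq_iff: "tclass I u = tclass I v \<longleftrightarrow> teq I u v"
  unfolding tclass_def by (auto dest: teq_sym teq_trans)

lemma teq_some_tclass: "teq I u (SOME w. w \<in> tclass I u)"
  using someI[of "teq I u" u] by (simp add: tclass_def)

lemma tlength_tclass: "tlength (tclass I u) = length u"
  unfolding tlength_def using teq_some_tclass teq_length by metis

section \<open>Minimal letters\<close>

definition min_letter :: "'a rel \<Rightarrow> 'a \<Rightarrow> 'a list \<Rightarrow> bool" where
  "min_letter I a w \<longleftrightarrow> a \<in> set w \<and> (\<forall>b\<in>set (takeWhile (\<lambda>x. x \<noteq> a) w). (b, a) \<in> I)"

lemma min_letter_Cons_self: "min_letter I a (a # v)"
  by (simp add: min_letter_def)

lemma min_letter_Cons: "a \<noteq> b \<Longrightarrow> min_letter I b (a # v) \<longleftrightarrow> (a, b) \<in> I \<and> min_letter I b v"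
  by (auto simp: min_letter_def)

lemma min_letter_append:
  "(\<forall>a\<in>set u. (a, b) \<in> I) \<Longrightarrow> b \<notin> set u \<Longrightarrow> min_letter I b v \<Longrightarrow> min_letter I b (u @ v)"
  by (auto simp: min_letter_def takeWhile_append)

lemma teq_min_letter:
  assumes "indep_alphabet I" and "teq I u v"
  shows "min_letter I a u \<longleftrightarrow> min_letter I a v"
proof (rule teq_invariant[OF _ assms(2)])
  fix u v assume "swap1 I u v"
  then obtain p q x y where xy: "(x, y) \<in> I" "u = p @ x # y # q" "v = p @ y # x # q"
    unfolding swap1_def by blast
  have "x \<noteq> y" "(y, x) \<in> I"
    using xy(1) assms(1) by (auto simp: indep_alphabet_def irrefl_def sym_def)
  then show "min_letter I a u \<longleftrightarrow> min_letter I a v"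
    using xy by (cases "a \<in> set p") (auto simp: min_letter_def takeWhile_append)
qed

lemma teq_commute_to_front: "\<forall>b\<in>set u. (b, a) \<in> I \<Longrightarrow> teq I (u @ a # r) (a # u @ r)"
proof (induction u)
  case (Cons b u)
  then have "teq I (b # u @ a # r) (b # a # u @ r)" by (simp add: teq_Cons)
  moreover have "swap1 I (b # a # u @ r) (a # b # u @ r)"
    unfolding swap1_def using Cons(2) by (metis append_Nil list.set_intros(1))
  ultimately show ?case using teq_if_swap1 teq_trans by fastforce
qed simp

lemma min_letter_iff:
  assumes "indep_alphabet I"
  shows "min_letter I a w \<longleftrightarrow> (\<exists>v. teq I w (a # v))"
proof
  assume min: "min_letter I a w"
  then obtain u r where w: "w = u @ a # r" "a \<notin> set u"
    using split_list_first[of a w] unfolding min_letter_def by blast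
  have "takeWhile (\<lambda>x. x \<noteq> a) (u @ a # r) = u"
    using w(2) by (induction u) auto
  then have "\<forall>b\<in>set u. (b, a) \<in> I" using min w(1) by (simp add: min_letter_def)
  then have "teq I w (a # u @ r)" using w(1) by (simp add: teq_commute_to_front)
  then show "\<exists>v. teq I w (a # v)" ..
next
  assume "\<exists>v. teq I w (a # v)"
  then obtain v where v: "teq I w (a # v)" ..
  show "min_letter I a w" using teq_min_letter[OF assms v] min_letter_Cons_self by simp
qed

lemma min_letters_indep:
  assumes "indep_alphabet I" "min_letter I a w" "min_letter I b w" "a \<noteq> b"
  shows "(a, b) \<in> I"
proof -
  obtain v where v: "teq I w (a # v)" using assms(2) unfolding min_letter_iff[OF assms(1)] ..
  have "min_letter I b (a # v)" using assms(3) teq_min_letter[OF assms(1) v] by simp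
  then show ?thesis using assms(4) by (simp add: min_letter_Cons)
qed

lemma teq_min_letters_prefix:
  assumes "indep_alphabet I"
  shows "distinct ds \<Longrightarrow> \<forall>d\<in>set ds. min_letter I d w \<Longrightarrow> \<exists>v. teq I w (ds @ v)"
proof (induction ds arbitrary: w)
  case Nil
  have "teq I w ([] @ w)" by simp
  then show ?case ..
next
  case (Cons d ds)
  then obtain v0 where v0: "teq I w (d # v0)" using min_letter_iff[OF assms] by auto
  have "\<forall>e\<in>set ds. min_letter I e v0"
  proof
    fix e assume e: "e \<in> set ds"
    have "min_letter I e (d # v0)" using e Cons.prems(2) teq_min_letter[OF assms v0] by simp
    moreover have "d \<noteq> e" using e Cons.prems(1) by auto
    ultimately show "min_letter I e v0" by (simp add: min_letter_Cons)
  qed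
  then obtain v where "teq I v0 (ds @ v)" using Cons.IH Cons.prems(1) by auto
  then show ?case using v0 teq_Cons teq_trans by fastforce
qed

section \<open>Cartier-Foata normal form\<close>

definition clique_word :: "'a set \<Rightarrow> 'a list" where
  "clique_word c = (SOME w. distinct w \<and> set w = c)"

definition foata_word :: "'a set list \<Rightarrow> 'a list" where
  "foata_word cs = concat (map clique_word cs)"

definition foata_chain :: "'a rel \<Rightarrow> 'a set list \<Rightarrow> bool" where
  "foata_chain I cs \<longleftrightarrow> list_all (is_clique I) cs \<and> successively (clique_arrow I) cs"

lemma foata_word_Nil [simp]: "foata_word [] = []"
  and foata_word_Cons [simp]: "foata_word (c # cs) = clique_word c @ foata_word cs"
  by (simp_all add: foata_word_def)

lemma
  assumes "finite c"
  shows distinct_clique_word: "distinct (clique_word c)"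
    and set_clique_word [simp]: "set (clique_word c) = c"
proof -
  have "\<exists>w. distinct w \<and> set w = c" using finite_distinct_list[OF assms] by blast
  then have "distinct (clique_word c) \<and> set (clique_word c) = c"
    unfolding clique_word_def by (rule someI_ex)
  then show "distinct (clique_word c)" "set (clique_word c) = c" by simp_all
qed

lemma length_clique_word: "finite c \<Longrightarrow> length (clique_word c) = card c"
  using distinct_card[OF distinct_clique_word] by fastforce

lemma card_clique_pos: "is_clique I c \<Longrightarrow> 0 < card c"
  by (simp add: is_clique_def card_gt_0_iff)

lemma foata_chain_Nil [simp]: "foata_chain I []"
  by (simp add: foata_chain_def)

lemma foata_chain_Cons:
  "foata_chain I (c # cs) \<longleftrightarrow>
     is_clique I c \<and> (cs \<noteq> [] \<longrightarrow> clique_arrow I c (hd cs)) \<and> foata_chain I cs"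
  by (auto simp: foata_chain_def successively_Cons)

lemma length_foata_word: "foata_chain I cs \<Longrightarrow> length (foata_word cs) = (\<Sum>c\<leftarrow>cs. card c)"
  by (induction cs) (auto simp: foata_chain_Cons is_clique_def length_clique_word)

lemma foata_word_eq_Nil_iff: "foata_chain I cs \<Longrightarrow> foata_word cs = [] \<longleftrightarrow> cs = []"
  by (induction cs) (auto simp: foata_chain_Cons is_clique_def dest: arg_cong[where f = set])

lemma not_min_letter_foata_word:
  "foata_chain I cs \<Longrightarrow> cs \<noteq> [] \<Longrightarrow> a \<notin> hd cs \<Longrightarrow> \<not> min_letter I a (foata_word cs)"
proof (induction cs)
  case (Cons c cs)
  have fin: "finite c" using Cons.prems(1) by (simp add: foata_chain_Cons is_clique_def)
  have a_notin: "a \<notin> set (clique_word c)" using Cons.prems(3) fin by simp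
  then have prefix: "takeWhile (\<lambda>x. x \<noteq> a) (foata_word (c # cs))
      = clique_word c @ takeWhile (\<lambda>x. x \<noteq> a) (foata_word cs)"
    unfolding foata_word_Cons by (intro takeWhile_append2) blast
  show ?case
  proof
    assume min: "min_letter I a (foata_word (c # cs))"
    then have a_in: "a \<in> set (foata_word cs)" using a_notin by (simp add: min_letter_def)
    then obtain d cs' where cs: "cs = d # cs'" by (cases cs) auto
    show False
    proof (cases "a \<in> d")
      case True
      have "clique_arrow I c d" using Cons.prems(1) cs by (simp add: foata_chain_Cons)
      then obtain b where b: "b \<in> c" "(b, a) \<notin> I" using True unfolding clique_arrow_def by blast
      then have "b \<in> set (takeWhile (\<lambda>x. x \<noteq> a) (foata_word (c # cs)))" using prefix fin by simp
      then show False using min b(2) unfolding min_letter_def by blast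
    next
      case False
      then have "\<not> min_letter I a (foata_word cs)"
        using Cons.IH Cons.prems(1) cs by (simp add: foata_chain_Cons)
      then show False using min prefix a_in by (simp add: min_letter_def)
    qed
  qed
qed simp

lemma min_letter_foata_word_iff:
  assumes "foata_chain I (c # cs)"
  shows "min_letter I a (foata_word (c # cs)) \<longleftrightarrow> a \<in> c"
proof
  show "min_letter I a (foata_word (c # cs)) \<Longrightarrow> a \<in> c"
    using not_min_letter_foata_word[OF assms] by auto
next
  assume a: "a \<in> c"
  have clique: "is_clique I c" using assms by (simp add: foata_chain_Cons)
  then have fin: "finite c" by (simp add: is_clique_def)
  have "(b, a) \<in> I" if "b \<in> set (takeWhile (\<lambda>x. x \<noteq> a) (clique_word c))" for b
  proof -
    have "b \<in> c" "b \<noteq> a" using set_takeWhileD[OF that] fin by simp_all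
    then show ?thesis using clique a unfolding is_clique_def by blast
  qed
  moreover have "takeWhile (\<lambda>x. x \<noteq> a) (foata_word (c # cs)) = takeWhile (\<lambda>x. x \<noteq> a) (clique_word c)"
    using takeWhile_append1[of a "clique_word c"] a fin by simp
  ultimately show "min_letter I a (foata_word (c # cs))"
    using a fin by (simp add: min_letter_def)
qed

lemma foata_chain_unique:
  assumes "indep_alphabet I"
  shows "foata_chain I cs \<Longrightarrow> foata_chain I ds \<Longrightarrow> teq I (foata_word cs) (foata_word ds) \<Longrightarrow> cs = ds"
proof (induction cs arbitrary: ds)
  case Nil
  then show ?case using teq_length[OF Nil.prems(3)] foata_word_eq_Nil_iff[OF Nil.prems(2)] by simp
next
  case (Cons c cs)
  have "foata_word ds \<noteq> []"
    using teq_length[OF Cons.prems(3)] foata_word_eq_Nil_iff[OF Cons.prems(1)] by auto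
  then obtain d ds' where ds: "ds = d # ds'" by (cases ds) auto
  have "a \<in> c \<longleftrightarrow> a \<in> d" for a
  proof -
    have "a \<in> c \<longleftrightarrow> min_letter I a (foata_word (c # cs))"
      using min_letter_foata_word_iff[OF Cons.prems(1)] by simp
    also have "\<dots> \<longleftrightarrow> min_letter I a (foata_word (d # ds'))"
      using teq_min_letter[OF assms Cons.prems(3)] ds by simp
    also have "\<dots> \<longleftrightarrow> a \<in> d"
      using min_letter_foata_word_iff[of I d ds' a] Cons.prems(2) ds by simp
    finally show ?thesis .
  qed
  then have "c = d" by blast
  moreover have "irrefl I" using assms by (simp add: indep_alphabet_def)
  then have "teq I (foata_word cs) (foata_word ds')"
    using teq_append_cancel[of I "clique_word c"] Cons.prems(3) ds \<open>c = d\<close> by simp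
  ultimately show ?case using Cons.IH Cons.prems(1,2) ds by (simp add: foata_chain_Cons)
qed

lemma min_letters_clique:
  assumes "indep_alphabet I" and "w \<noteq> []"
  shows "is_clique I {a. min_letter I a w}"
proof -
  have "min_letter I (hd w) w" using assms(2) by (cases w) (simp_all add: min_letter_Cons_self)
  moreover have "{a. min_letter I a w} \<subseteq> set w" by (auto simp: min_letter_def)
  ultimately show ?thesis
    unfolding is_clique_def using min_letters_indep[OF assms(1)] finite_subset by blast
qed

lemma clique_arrow_min_letters:
  assumes ind: "indep_alphabet I" and v: "teq I w (clique_word {a. min_letter I a w} @ v)"
  shows "clique_arrow I {a. min_letter I a w} {b. min_letter I b v}"
proof -
  define M where "M = {a. min_letter I a w}"
  have fin: "finite M" unfolding M_def by (rule finite_subset[of _ "set w"]) (auto simp: min_letter_def)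
  have "\<exists>a\<in>M. (a, b) \<notin> I" if b: "min_letter I b v" for b
  proof (rule ccontr)
    assume "\<not> (\<exists>a\<in>M. (a, b) \<notin> I)"
    then have indep_M: "\<forall>a\<in>set (clique_word M). (a, b) \<in> I" using fin by simp
    then have b_notin: "b \<notin> set (clique_word M)"
      using ind by (auto simp: indep_alphabet_def irrefl_def)
    have "min_letter I b (clique_word M @ v)" by (rule min_letter_append[OF indep_M b_notin b])
    then have "min_letter I b w" by (rule iffD2[OF teq_min_letter[OF ind v[folded M_def]]])
    then show False using b_notin fin by (simp add: M_def)
  qed
  then show ?thesis by (simp add: clique_arrow_def M_def)
qed

lemma foata_chain_exists:
  assumes ind: "indep_alphabet I"
  shows "\<exists>cs. foata_chain I cs \<and> teq I w (foata_word cs)"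
proof (induction "length w" arbitrary: w rule: less_induct)
  case less
  show ?case
  proof (cases "w = []")
    case True
    then show ?thesis by (intro exI[of _ "[]"]) simp
  next
    case False
    define M where "M = {a. min_letter I a w}"
    have clique: "is_clique I M" using min_letters_clique[OF ind False] by (simp add: M_def)
    then have fin: "finite M" by (simp add: is_clique_def)
    have "\<forall>d\<in>set (clique_word M). min_letter I d w" using fin by (simp add: M_def)
    then obtain v where v: "teq I w (clique_word M @ v)"
      using teq_min_letters_prefix[OF ind distinct_clique_word[OF fin]] by blast
    have "length v < length w"
      using teq_length[OF v] length_clique_word[OF fin] card_clique_pos[OF clique] by simp
    then obtain cs where cs: "foata_chain I cs" "teq I v (foata_word cs)" using less by blast
    have "clique_arrow I M d" if cs_eq: "cs = d # cs'" for d cs'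
    proof -
      have "d \<subseteq> {b. min_letter I b v}"
        using min_letter_foata_word_iff[of I d cs'] teq_min_letter[OF ind cs(2)] cs(1) cs_eq by auto
      then show ?thesis
        using clique_arrow_min_letters[OF ind v[unfolded M_def]] by (auto simp: clique_arrow_def M_def)
    qed
    then have "foata_chain I (M # cs)" using clique cs(1) by (cases cs) (simp_all add: foata_chain_Cons)
    moreover have "teq I w (foata_word (M # cs))"
      using teq_trans[OF v teq_append[OF teq_refl cs(2)]] by simp
    ultimately show ?thesis by blast
  qed
qed

lemma tconcat_ctrace: "tconcat I (map (ctrace I) cs) = tclass I (foata_word cs)"
proof -
  have "teq I (foata_word cs) (concat (map (\<lambda>x. SOME w. w \<in> x) (map (ctrace I) cs)))"
    by (induction cs) (simp_all add: ctrace_def teq_append teq_some_tclass flip: clique_word_def)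
  then show ?thesis unfolding tconcat_def tclass_eq_iff by (rule teq_sym)
qed

lemma normal_form_tclass_iff:
  "normal_form I (tclass I w) cs \<longleftrightarrow> foata_chain I cs \<and> teq I w (foata_word cs)"
  by (simp add: normal_form_def foata_chain_def tconcat_ctrace tclass_eq_iff list_all_iff
      successively_conv_nth)

lemma height_tclass:
  assumes "indep_alphabet I" "foata_chain I cs" "teq I w (foata_word cs)"
  shows "height I (tclass I w) = length cs"
proof -
  have "(THE cs. normal_form I (tclass I w) cs) = cs"
  proof (rule the_equality)
    show "normal_form I (tclass I w) cs" using assms(2,3) by (simp add: normal_form_tclass_iff)
  next
    fix ds assume "normal_form I (tclass I w) ds"
    then have ds: "foata_chain I ds" "teq I w (foata_word ds)" by (simp_all add: normal_form_tclass_iff)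
    have "teq I (foata_word ds) (foata_word cs)" using teq_trans[OF teq_sym[OF ds(2)] assms(3)] .
    then show "ds = cs" using foata_chain_unique[OF assms(1) ds(1) assms(2)] by blast
  qed
  then show ?thesis by (simp add: height_def)
qed

lemma height_tclass_Nil: "indep_alphabet I \<Longrightarrow> height I (tclass I []) = 0"
  using height_tclass[of I "[]" "[]"] by simp

section \<open>Executions and paths in the DSC\<close>

lemma indep_alphabet_if_concurrent_system: "concurrent_system I \<delta> \<Longrightarrow> indep_alphabet I"
  by (simp add: concurrent_system_def)

lemma run_append: "run \<delta> \<alpha> (u @ v) = (case run \<delta> \<alpha> u of None \<Rightarrow> None | Some \<beta> \<Rightarrow> run \<delta> \<beta> v)"
  by (induction u arbitrary: \<alpha>) (auto split: option.split)

lemma teq_run: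
  assumes "concurrent_system I \<delta>" and "teq I u v"
  shows "run \<delta> \<alpha> u = run \<delta> \<alpha> v"
proof (rule teq_invariant[OF _ assms(2)])
  fix u v assume "swap1 I u v"
  then obtain p q a b where ab: "(a, b) \<in> I" "u = p @ [a, b] @ q" "v = p @ [b, a] @ q"
    unfolding swap1_def by auto
  have "run \<delta> \<beta> [a, b] = run \<delta> \<beta> [b, a]" for \<beta>
    using assms(1) ab(1) by (simp add: concurrent_system_def)
  then have "run \<delta> \<beta> ([a, b] @ q) = run \<delta> \<beta> ([b, a] @ q)" for \<beta>
    by (simp only: run_append)
  then show "run \<delta> \<alpha> u = run \<delta> \<alpha> v"
    using ab(2,3) by (simp add: run_append del: run.simps split: option.split)
qed

lemma tact_tclass: "concurrent_system I \<delta> \<Longrightarrow> tact \<delta> \<alpha> (tclass I w) = run \<delta> \<alpha> w"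
  unfolding tact_def using teq_run teq_some_tclass by metis

lemma cact_eq_run: "concurrent_system I \<delta> \<Longrightarrow> cact I \<delta> \<alpha> c = run \<delta> \<alpha> (clique_word c)"
  by (simp add: cact_def ctrace_def tact_tclass flip: clique_word_def)

lemma executions_eq:
  "concurrent_system I \<delta> \<Longrightarrow> executions I \<delta> = {(\<alpha>, tclass I w) | \<alpha> w. run \<delta> \<alpha> w \<noteq> None}"
  by (fastforce simp: executions_def traces_def tact_tclass)

lemma paths_iff: "vs \<in> paths node arc n \<longleftrightarrow> length vs = n \<and> list_all node vs \<and> successively arc vs"
  by (auto simp: paths_def list_all_iff successively_conv_nth)

definition dsc_path :: "'a rel \<Rightarrow> ('a \<Rightarrow> 's \<Rightarrow> 's option) \<Rightarrow> ('s \<times> 'a set) list \<Rightarrow> bool" where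
  "dsc_path I \<delta> vs \<longleftrightarrow> vs \<noteq> [] \<and> list_all (dsc_node I \<delta>) vs \<and> successively (dsc_arc I \<delta>) vs"

lemma dsc_path_Cons:
  "dsc_path I \<delta> (v # vs) \<longleftrightarrow> dsc_node I \<delta> v \<and> (vs \<noteq> [] \<longrightarrow> dsc_arc I \<delta> v (hd vs) \<and> dsc_path I \<delta> vs)"
  by (auto simp: dsc_path_def successively_Cons)

lemma dsc_paths_eq: "1 \<le> h \<Longrightarrow> dsc_paths I \<delta> h = {vs. dsc_path I \<delta> vs \<and> length vs = h}"
  by (auto simp: dsc_paths_def paths_iff dsc_path_def)

lemma foata_chain_dsc_path: "dsc_path I \<delta> vs \<Longrightarrow> foata_chain I (map snd vs)"
  by (induction vs) (auto simp: dsc_path_Cons foata_chain_Cons dsc_node_def dsc_arc_def hd_map)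

lemma card_pos_if_dsc_path: "dsc_path I \<delta> vs \<Longrightarrow> v \<in> set vs \<Longrightarrow> 0 < card (snd v)"
  by (auto simp: dsc_path_def list_all_iff dsc_node_def card_clique_pos)

lemma run_dsc_path:
  assumes "concurrent_system I \<delta>"
  shows "dsc_path I \<delta> vs \<Longrightarrow>
    run \<delta> (fst (hd vs)) (foata_word (map snd vs)) = cact I \<delta> (fst (last vs)) (snd (last vs))"
proof (induction vs)
  case (Cons v vs)
  obtain \<alpha> c where v: "v = (\<alpha>, c)" by fastforce
  show ?case
  proof (cases "vs = []")
    case True
    then show ?thesis using v by (simp add: cact_eq_run[OF assms])
  next
    case False
    obtain \<beta> d where hd: "hd vs = (\<beta>, d)" by fastforce
    have "cact I \<delta> \<alpha> c = Some \<beta>"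
      using Cons.prems v hd False by (simp add: dsc_path_Cons dsc_arc_def)
    then show ?thesis using Cons.IH Cons.prems False v hd
      by (simp add: dsc_path_Cons run_append cact_eq_run[OF assms])
  qed
qed (simp add: dsc_path_def)

lemma dsc_path_exists:
  assumes "concurrent_system I \<delta>"
  shows "foata_chain I cs \<Longrightarrow> cs \<noteq> [] \<Longrightarrow> run \<delta> \<alpha> (foata_word cs) \<noteq> None \<Longrightarrow>
    \<exists>vs. dsc_path I \<delta> vs \<and> map snd vs = cs \<and> fst (hd vs) = \<alpha>"
proof (induction cs arbitrary: \<alpha>)
  case (Cons c cs)
  obtain \<beta> where \<beta>: "run \<delta> \<alpha> (clique_word c) = Some \<beta>" "run \<delta> \<beta> (foata_word cs) \<noteq> None"
    using Cons.prems(3) by (auto simp: run_append split: option.splits)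
  have node: "dsc_node I \<delta> (\<alpha>, c)"
    using \<beta>(1) Cons.prems(1) by (simp add: dsc_node_def foata_chain_Cons cact_eq_run[OF assms])
  show ?case
  proof (cases "cs = []")
    case True
    then show ?thesis using node by (intro exI[of _ "[(\<alpha>, c)]"]) (simp add: dsc_path_def)
  next
    case False
    then obtain vs where vs: "dsc_path I \<delta> vs" "map snd vs = cs" "fst (hd vs) = \<beta>"
      using Cons.IH Cons.prems(1) \<beta>(2) by (auto simp: foata_chain_Cons)
    have "vs \<noteq> []" "dsc_node I \<delta> (hd vs)" using vs(1) by (auto simp: dsc_path_def list_all_iff)
    moreover have "clique_arrow I c (snd (hd vs))"
      using Cons.prems(1) False vs(2) \<open>vs \<noteq> []\<close> by (auto simp: foata_chain_Cons hd_map)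
    ultimately have "dsc_arc I \<delta> (\<alpha>, c) (hd vs)"
      using node vs(3) \<beta>(1) by (cases "hd vs") (simp add: dsc_arc_def cact_eq_run[OF assms])
    then show ?thesis using vs node by (intro exI[of _ "(\<alpha>, c) # vs"]) (simp add: dsc_path_Cons)
  qed
qed (simp add: dsc_path_def)

lemma dsc_path_eqI:
  "dsc_path I \<delta> vs \<Longrightarrow> dsc_path I \<delta> ws \<Longrightarrow> map snd vs = map snd ws \<Longrightarrow> fst (hd vs) = fst (hd ws)
    \<Longrightarrow> vs = ws"
proof (induction vs arbitrary: ws)
  case (Cons v vs)
  obtain w ws' where ws: "ws = w # ws'" using Cons.prems(3) by (cases ws) auto
  have "v = w" using Cons.prems(3,4) ws by (simp add: prod_eq_iff)
  show ?case
  proof (cases "vs = []")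
    case True
    then show ?thesis using Cons.prems(3) ws \<open>v = w\<close> by simp
  next
    case False
    then have "ws' \<noteq> []" using Cons.prems(3) ws by auto
    then have "dsc_arc I \<delta> v (hd vs)" "dsc_arc I \<delta> v (hd ws')"
      using Cons.prems(1,2) ws \<open>v = w\<close> False by (auto simp: dsc_path_Cons)
    then have "fst (hd vs) = fst (hd ws')" unfolding dsc_arc_def by (auto split: prod.splits)
    then have "vs = ws'" using Cons.IH Cons.prems(1,2,3) ws False \<open>ws' \<noteq> []\<close> by (simp add: dsc_path_Cons)
    then show ?thesis using ws \<open>v = w\<close> by simp
  qed
qed (simp add: dsc_path_def)

definition path_execution :: "'a rel \<Rightarrow> ('s \<times> 'a set) list \<Rightarrow> 's \<times> 'a list set" where
  "path_execution I vs = (fst (hd vs), tclass I (foata_word (map snd vs)))"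

lemma fst_path_execution [simp]: "fst (path_execution I vs) = fst (hd vs)"
  by (simp add: path_execution_def)

lemma height_path_execution:
  "concurrent_system I \<delta> \<Longrightarrow> dsc_path I \<delta> vs \<Longrightarrow> height I (snd (path_execution I vs)) = length vs"
  using height_tclass[OF indep_alphabet_if_concurrent_system foata_chain_dsc_path teq_refl]
  by (simp add: path_execution_def)

lemma tlength_path_execution:
  "dsc_path I \<delta> vs \<Longrightarrow> tlength (snd (path_execution I vs)) = (\<Sum>v\<leftarrow>vs. card (snd v))"
  using length_foata_word[OF foata_chain_dsc_path]
  by (simp add: path_execution_def tlength_tclass comp_def)

lemma tact_path_execution:
  "concurrent_system I \<delta> \<Longrightarrow> dsc_path I \<delta> vs \<Longrightarrow>
    tact \<delta> (fst (hd vs)) (snd (path_execution I vs)) = cact I \<delta> (fst (last vs)) (snd (last vs))"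
  by (simp add: path_execution_def tact_tclass run_dsc_path)

lemma inj_on_path_execution:
  assumes "concurrent_system I \<delta>"
  shows "inj_on (path_execution I) {vs. dsc_path I \<delta> vs}"
proof (rule inj_onI)
  fix vs ws assume vs: "vs \<in> {vs. dsc_path I \<delta> vs}" and ws: "ws \<in> {vs. dsc_path I \<delta> vs}"
    and eq: "path_execution I vs = path_execution I ws"
  then have "teq I (foata_word (map snd vs)) (foata_word (map snd ws))"
    by (simp add: path_execution_def tclass_eq_iff)
  then have "map snd vs = map snd ws"
    using foata_chain_unique[OF indep_alphabet_if_concurrent_system[OF assms]] foata_chain_dsc_path vs ws
    by blast
  moreover have "fst (hd vs) = fst (hd ws)" using eq by (simp add: path_execution_def)
  ultimately show "vs = ws" using dsc_path_eqI vs ws by blast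
qed

lemma path_execution_image:
  assumes "concurrent_system I \<delta>"
  shows "path_execution I ` {vs. dsc_path I \<delta> vs} = {(\<alpha>, x) \<in> executions I \<delta>. tlength x \<noteq> 0}"
proof (intro equalityI subsetI)
  fix e assume "e \<in> path_execution I ` {vs. dsc_path I \<delta> vs}"
  then obtain vs where vs: "dsc_path I \<delta> vs" "e = path_execution I vs" by blast
  have "dsc_node I \<delta> (last vs)" using vs(1) by (simp add: dsc_path_def list_all_iff)
  then have "tact \<delta> (fst e) (snd e) \<noteq> None"
    using tact_path_execution[OF assms vs(1)] vs(2) by (auto simp: dsc_node_def)
  moreover have "tlength (snd e) \<noteq> 0"
  proof -
    have "vs \<noteq> []" using vs(1) by (simp add: dsc_path_def)
    then have "0 < card (snd (hd vs))" using card_pos_if_dsc_path[OF vs(1) hd_in_set] by simp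
    then show ?thesis
      using tlength_path_execution[OF vs(1)] vs(2) \<open>vs \<noteq> []\<close> by (auto simp: sum_list_eq_0_iff)
  qed
  ultimately show "e \<in> {(\<alpha>, x) \<in> executions I \<delta>. tlength x \<noteq> 0}"
    using vs(2) by (auto simp: executions_def traces_def path_execution_def)
next
  fix e assume "e \<in> {(\<alpha>, x) \<in> executions I \<delta>. tlength x \<noteq> 0}"
  then obtain \<alpha> w where e: "e = (\<alpha>, tclass I w)" "run \<delta> \<alpha> w \<noteq> None" "w \<noteq> []"
    by (auto simp: executions_eq[OF assms] tlength_tclass)
  obtain cs where cs: "foata_chain I cs" "teq I w (foata_word cs)"
    using foata_chain_exists[OF indep_alphabet_if_concurrent_system[OF assms]] by blast
  have "cs \<noteq> []" using e(3) teq_length[OF cs(2)] by auto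
  moreover have "run \<delta> \<alpha> (foata_word cs) \<noteq> None" using e(2) teq_run[OF assms cs(2)] by simp
  ultimately obtain vs where vs: "dsc_path I \<delta> vs" "map snd vs = cs" "fst (hd vs) = \<alpha>"
    using dsc_path_exists[OF assms cs(1)] by blast
  have "path_execution I vs = e" using vs cs(2) e(1) by (simp add: path_execution_def tclass_eq_iff teq_sym)
  then show "e \<in> path_execution I ` {vs. dsc_path I \<delta> vs}" using vs(1) by blast
qed

lemma bij_betw_path_execution:
  "concurrent_system I \<delta> \<Longrightarrow>
    bij_betw (path_execution I) {vs. dsc_path I \<delta> vs} {(\<alpha>, x) \<in> executions I \<delta>. tlength x \<noteq> 0}"
  by (simp add: bij_betw_def inj_on_path_execution path_execution_image)

section \<open>Paths in the ADSC\<close>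

fun adsc_expand :: "('s \<times> 'a set) list \<Rightarrow> ('s \<times> 'a set \<times> nat) list" where
  "adsc_expand [] = []"
| "adsc_expand ((\<alpha>, c) # vs) = map (\<lambda>i. (\<alpha>, c, i)) [1..<Suc (card c)] @ adsc_expand vs"

lemma length_adsc_expand: "length (adsc_expand vs) = (\<Sum>v\<leftarrow>vs. card (snd v))"
  by (induction vs rule: adsc_expand.induct) simp_all

lemma adsc_expand_eq_Nil_iff: "\<forall>v\<in>set vs. 0 < card (snd v) \<Longrightarrow> adsc_expand vs = [] \<longleftrightarrow> vs = []"
  by (induction vs rule: adsc_expand.induct) auto

lemma hd_adsc_expand_Cons: "0 < card c \<Longrightarrow> hd (adsc_expand ((\<alpha>, c) # vs)) = (\<alpha>, c, 1)"
  by (simp add: upt_conv_Cons del: upt_Suc)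

lemma hd_adsc_expand:
  "\<forall>v\<in>set vs. 0 < card (snd v) \<Longrightarrow> vs \<noteq> [] \<Longrightarrow> hd (adsc_expand vs) = (fst (hd vs), snd (hd vs), 1)"
  by (induction vs rule: adsc_expand.induct) (simp_all add: upt_conv_Cons del: upt_Suc)

lemma last_adsc_expand:
  "\<forall>v\<in>set vs. 0 < card (snd v) \<Longrightarrow> vs \<noteq> [] \<Longrightarrow>
    last (adsc_expand vs) = (fst (last vs), snd (last vs), card (snd (last vs)))"
  by (induction vs rule: adsc_expand.induct) (auto simp: adsc_expand_eq_Nil_iff)

lemma adsc_expand_inj:
  "\<forall>v\<in>set vs. 0 < card (snd v) \<Longrightarrow> \<forall>w\<in>set ws. 0 < card (snd w) \<Longrightarrow>
    adsc_expand vs = adsc_expand ws \<Longrightarrow> vs = ws"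
proof (induction vs arbitrary: ws rule: adsc_expand.induct)
  case 1
  then show ?case using adsc_expand_eq_Nil_iff by metis
next
  case (2 \<alpha> c vs)
  have "ws \<noteq> []" using "2.prems" adsc_expand_eq_Nil_iff by (metis list.distinct(1))
  then obtain \<beta> d ws' where ws: "ws = (\<beta>, d) # ws'" by (metis list.exhaust surj_pair)
  have "(\<alpha>, c, 1) = (\<beta>, d, 1)"
    using hd_adsc_expand_Cons[of c \<alpha> vs] hd_adsc_expand_Cons[of d \<beta> ws'] "2.prems" ws by simp
  then have "\<alpha> = \<beta>" "c = d" by simp_all
  then have "adsc_expand vs = adsc_expand ws'" using "2.prems"(3) ws by simp
  then show ?case using "2.IH" "2.prems"(1,2) ws \<open>\<alpha> = \<beta>\<close> \<open>c = d\<close> by simp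
qed

lemma adsc_path_block:
  assumes "dsc_node I \<delta> (\<alpha>, c)" "1 \<le> j"
  shows "list_all (adsc_node I \<delta>) (map (\<lambda>i. (\<alpha>, c, i)) [j..<Suc (card c)])
    \<and> successively (adsc_arc I \<delta>) (map (\<lambda>i. (\<alpha>, c, i)) [j..<Suc (card c)])"
  using assms by (auto simp: list_all_iff successively_conv_nth adsc_node_def adsc_arc_def simp del: upt_Suc)

lemma adsc_path_adsc_expand:
  "dsc_path I \<delta> vs \<Longrightarrow>
    list_all (adsc_node I \<delta>) (adsc_expand vs) \<and> successively (adsc_arc I \<delta>) (adsc_expand vs)"
proof (induction vs rule: adsc_expand.induct)
  case (2 \<alpha> c vs)
  have node: "dsc_node I \<delta> (\<alpha>, c)" using "2.prems" by (simp add: dsc_path_Cons)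
  show ?case
  proof (cases "vs = []")
    case True
    then show ?thesis using adsc_path_block[OF node] by simp
  next
    case False
    obtain \<beta> d vs' where vs: "vs = (\<beta>, d) # vs'" using False by (metis list.exhaust surj_pair)
    have arc: "dsc_arc I \<delta> (\<alpha>, c) (\<beta>, d)" and tail: "dsc_path I \<delta> vs"
      using "2.prems" vs by (simp_all add: dsc_path_Cons)
    have "0 < card c" "0 < card d"
      using card_pos_if_dsc_path[OF "2.prems", of "(\<alpha>, c)"] card_pos_if_dsc_path[OF "2.prems", of "(\<beta>, d)"] vs
      by simp_all
    then have "adsc_arc I \<delta> (\<alpha>, c, card c) (\<beta>, d, 1)"
      using arc by (auto simp: adsc_arc_def adsc_node_def dsc_arc_def)
    moreover have "hd (adsc_expand vs) = (\<beta>, d, 1)" unfolding vs by (rule hd_adsc_expand_Cons[OF \<open>0 < card d\<close>])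
    moreover have "last (map (\<lambda>i. (\<alpha>, c, i)) [1..<Suc (card c)]) = (\<alpha>, c, card c)"
      using \<open>0 < card c\<close> by simp
    ultimately show ?thesis using "2.IH"[OF tail] adsc_path_block[OF node, of 1]
      by (simp add: successively_append_iff del: upt_Suc)
  qed
qed (simp add: dsc_path_def)

lemma adsc_path_decompose:
  "list_all (adsc_node I \<delta>) vs \<Longrightarrow> successively (adsc_arc I \<delta>) vs \<Longrightarrow> vs \<noteq> [] \<Longrightarrow>
    hd vs = (\<alpha>, c, i) \<Longrightarrow> snd (snd (last vs)) = card (fst (snd (last vs))) \<Longrightarrow>
    \<exists>ws. vs = map (\<lambda>j. (\<alpha>, c, j)) [i..<Suc (card c)] @ adsc_expand ws \<and> dsc_path I \<delta> ((\<alpha>, c) # ws)"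
proof (induction vs arbitrary: \<alpha> c i)
  case (Cons v vs)
  have v: "v = (\<alpha>, c, i)" using Cons.prems(4) by simp
  have node: "dsc_node I \<delta> (\<alpha>, c)" "1 \<le> i" "i \<le> card c"
    using Cons.prems(1) v by (auto simp: adsc_node_def)
  show ?case
  proof (cases "vs = []")
    case True
    then have "i = card c" using Cons.prems(5) v by simp
    then show ?thesis using True v node(1) by (intro exI[of _ "[]"]) (simp add: dsc_path_def)
  next
    case False
    obtain \<beta> d j where hd: "hd vs = (\<beta>, d, j)" by (cases "hd vs") auto
    have arc: "adsc_arc I \<delta> (\<alpha>, c, i) (\<beta>, d, j)"
      using Cons.prems(2) v hd False by (simp add: successively_Cons)
    have tail: "list_all (adsc_node I \<delta>) vs" "successively (adsc_arc I \<delta>) vs"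
      "snd (snd (last vs)) = card (fst (snd (last vs)))"
      using Cons.prems(1,2,5) False by (simp_all add: successively_Cons)
    from arc consider (inner) "\<beta> = \<alpha>" "d = c" "j = Suc i"
      | (boundary) "i = card c" "j = 1" "dsc_arc I \<delta> (\<alpha>, c) (\<beta>, d)"
      unfolding adsc_arc_def by auto
    then show ?thesis
    proof cases
      case inner
      then have "hd vs = (\<alpha>, c, Suc i)" using hd by simp
      then obtain ws where ws: "vs = map (\<lambda>j. (\<alpha>, c, j)) [Suc i..<Suc (card c)] @ adsc_expand ws"
        "dsc_path I \<delta> ((\<alpha>, c) # ws)"
        using Cons.IH[OF tail(1,2) False _ tail(3)] by blast
      have "[i..<Suc (card c)] = i # [Suc i..<Suc (card c)]" using node(3) by (simp add: upt_conv_Cons)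
      then show ?thesis using ws v by (intro exI[of _ ws]) simp
    next
      case boundary
      then have "hd vs = (\<beta>, d, 1)" using hd by simp
      then obtain ws where "vs = map (\<lambda>j. (\<beta>, d, j)) [1..<Suc (card d)] @ adsc_expand ws"
        "dsc_path I \<delta> ((\<beta>, d) # ws)"
        using Cons.IH[OF tail(1,2) False _ tail(3)] by blast
      then have ws: "vs = adsc_expand ((\<beta>, d) # ws)" "dsc_path I \<delta> ((\<beta>, d) # ws)" by simp_all
      have "dsc_path I \<delta> ((\<alpha>, c) # (\<beta>, d) # ws)"
        using ws(2) node(1) boundary(3) by (simp add: dsc_path_Cons)
      then show ?thesis using ws(1) v boundary(1) by (intro exI[of _ "(\<beta>, d) # ws"]) simp
    qed
  qed
qed simp

lemma adsc_expand_image: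
  "adsc_expand ` {vs. dsc_path I \<delta> vs} = {vs. vs \<in> adsc_full_paths I \<delta> (length vs)}"
proof (intro equalityI subsetI)
  fix us assume "us \<in> adsc_expand ` {vs. dsc_path I \<delta> vs}"
  then obtain vs where vs: "dsc_path I \<delta> vs" "us = adsc_expand vs" by blast
  obtain \<alpha> c vs' where vs_eq: "vs = (\<alpha>, c) # vs'"
    using vs(1) by (cases vs) (auto simp: dsc_path_def)
  have pos: "\<forall>v\<in>set vs. 0 < card (snd v)" using card_pos_if_dsc_path[OF vs(1)] by blast
  have "hd us = (\<alpha>, c, 1)" unfolding vs(2) vs_eq by (rule hd_adsc_expand_Cons) (use pos vs_eq in simp)
  moreover have "last us = (fst (last vs), snd (last vs), card (snd (last vs)))"
    unfolding vs(2) by (rule last_adsc_expand[OF pos]) (simp add: vs_eq)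
  moreover have "us \<noteq> []" using adsc_expand_eq_Nil_iff[OF pos] vs(2) by (simp add: vs_eq)
  ultimately show "us \<in> {vs. vs \<in> adsc_full_paths I \<delta> (length vs)}"
    using adsc_path_adsc_expand[OF vs(1)] vs(2) by (simp add: adsc_full_paths_def paths_iff)
next
  fix us assume "us \<in> {vs. vs \<in> adsc_full_paths I \<delta> (length vs)}"
  then have us: "list_all (adsc_node I \<delta>) us" "successively (adsc_arc I \<delta>) us" "us \<noteq> []"
    "snd (snd (hd us)) = 1" "snd (snd (last us)) = card (fst (snd (last us)))"
    by (simp_all add: adsc_full_paths_def paths_iff)
  obtain \<alpha> c where "hd us = (\<alpha>, c, 1)" using us(4) by (cases "hd us") auto
  then obtain ws where "us = map (\<lambda>j. (\<alpha>, c, j)) [1..<Suc (card c)] @ adsc_expand ws"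
    "dsc_path I \<delta> ((\<alpha>, c) # ws)"
    using adsc_path_decompose[OF us(1-3) _ us(5)] by blast
  then have "us = adsc_expand ((\<alpha>, c) # ws)" "dsc_path I \<delta> ((\<alpha>, c) # ws)" by simp_all
  then show "us \<in> adsc_expand ` {vs. dsc_path I \<delta> vs}" by blast
qed

lemma bij_betw_adsc_expand:
  "bij_betw adsc_expand {vs. dsc_path I \<delta> vs} {vs. vs \<in> adsc_full_paths I \<delta> (length vs)}"
proof (rule bij_betw_imageI)
  show "inj_on adsc_expand {vs. dsc_path I \<delta> vs}"
  proof (rule inj_onI)
    fix vs ws assume "vs \<in> {vs. dsc_path I \<delta> vs}" "ws \<in> {vs. dsc_path I \<delta> vs}"
      and "adsc_expand vs = adsc_expand ws"
    then show "vs = ws" by (intro adsc_expand_inj) (auto intro: card_pos_if_dsc_path)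
  qed
qed (rule adsc_expand_image)

section \<open>The bijections\<close>

definition dsc_paths_of_size ::
    "'a rel \<Rightarrow> ('a \<Rightarrow> 's \<Rightarrow> 's option) \<Rightarrow> nat \<Rightarrow> ('s \<times> 'a set) list set" where
  "dsc_paths_of_size I \<delta> n = {vs. dsc_path I \<delta> vs \<and> (\<Sum>v\<leftarrow>vs. card (snd v)) = n}"

lemma dsc_paths_bij_executions_height:
  assumes "concurrent_system I \<delta>" "1 \<le> h"
  shows "bij_betw (path_execution I) (dsc_paths I \<delta> h) (executions_height I \<delta> h)"
proof -
  have "bij_betw (path_execution I) {vs \<in> {vs. dsc_path I \<delta> vs}. length vs = h}
      {e \<in> {(\<alpha>, x) \<in> executions I \<delta>. tlength x \<noteq> 0}. height I (snd e) = h}"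
    by (rule bij_betw_Collect[OF bij_betw_path_execution[OF assms(1)]])
      (simp add: height_path_execution[OF assms(1)])
  moreover have "{vs \<in> {vs. dsc_path I \<delta> vs}. length vs = h} = dsc_paths I \<delta> h"
    unfolding dsc_paths_eq[OF assms(2)] by simp
  moreover have "{e \<in> {(\<alpha>, x) \<in> executions I \<delta>. tlength x \<noteq> 0}. height I (snd e) = h}
      = executions_height I \<delta> h"
    using assms height_tclass_Nil[OF indep_alphabet_if_concurrent_system[OF assms(1)]]
    by (auto simp: executions_height_def executions_eq tlength_tclass)
  ultimately show ?thesis by simp
qed

lemma dsc_paths_of_size_bij_executions_length:
  assumes "concurrent_system I \<delta>" "1 \<le> n"
  shows "bij_betw (path_execution I) (dsc_paths_of_size I \<delta> n) (executions_length I \<delta> n)"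
proof -
  have "bij_betw (path_execution I) {vs \<in> {vs. dsc_path I \<delta> vs}. (\<Sum>v\<leftarrow>vs. card (snd v)) = n}
      {e \<in> {(\<alpha>, x) \<in> executions I \<delta>. tlength x \<noteq> 0}. tlength (snd e) = n}"
    by (rule bij_betw_Collect[OF bij_betw_path_execution[OF assms(1)]])
      (simp add: tlength_path_execution)
  moreover have "{e \<in> {(\<alpha>, x) \<in> executions I \<delta>. tlength x \<noteq> 0}. tlength (snd e) = n}
      = executions_length I \<delta> n"
    using assms(2) by (auto simp: executions_length_def)
  ultimately show ?thesis by (simp add: dsc_paths_of_size_def)
qed

lemma dsc_paths_of_size_bij_adsc_full_paths:
  "bij_betw adsc_expand (dsc_paths_of_size I \<delta> n) (adsc_full_paths I \<delta> n)"
proof -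
  have "bij_betw adsc_expand {vs \<in> {vs. dsc_path I \<delta> vs}. (\<Sum>v\<leftarrow>vs. card (snd v)) = n}
      {us \<in> {us. us \<in> adsc_full_paths I \<delta> (length us)}. length us = n}"
    by (rule bij_betw_Collect[OF bij_betw_adsc_expand]) (simp add: length_adsc_expand)
  moreover have "{us \<in> {us. us \<in> adsc_full_paths I \<delta> (length us)}. length us = n} = adsc_full_paths I \<delta> n"
    by (auto simp: adsc_full_paths_def paths_iff)
  ultimately show ?thesis by (simp add: dsc_paths_of_size_def)
qed

lemma executions_from_to_bij:
  "bij_betw (Pair \<alpha>) (executions_from_to I \<delta> n \<alpha> \<beta>)
     {e \<in> executions_length I \<delta> n. fst e = \<alpha> \<and> tact \<delta> (fst e) (snd e) = Some \<beta>}"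
  by (rule bij_betw_imageI)
    (auto simp: inj_on_def executions_from_to_def executions_length_def executions_def)

lemma dsc_paths_from_to_bij_executions:
  assumes "concurrent_system I \<delta>" "1 \<le> n"
  shows "bij_betw (path_execution I)
     {vs \<in> dsc_paths_of_size I \<delta> n. fst (hd vs) = \<alpha> \<and> cact I \<delta> (fst (last vs)) (snd (last vs)) = Some \<beta>}
     {e \<in> executions_length I \<delta> n. fst e = \<alpha> \<and> tact \<delta> (fst e) (snd e) = Some \<beta>}"
  by (rule bij_betw_Collect[OF dsc_paths_of_size_bij_executions_length[OF assms]])
    (simp add: dsc_paths_of_size_def tact_path_execution[OF assms(1)])

lemma dsc_paths_from_to_bij_adsc_full_paths:
  "bij_betw adsc_expand
     {vs \<in> dsc_paths_of_size I \<delta> n. fst (hd vs) = \<alpha> \<and> cact I \<delta> (fst (last vs)) (snd (last vs)) = Some \<beta>}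
     (adsc_full_paths_from_to I \<delta> n \<alpha> \<beta>)"
  unfolding adsc_full_paths_from_to_def
proof (rule bij_betw_Collect[OF dsc_paths_of_size_bij_adsc_full_paths])
  fix vs assume "vs \<in> dsc_paths_of_size I \<delta> n"
  then have path: "dsc_path I \<delta> vs" by (simp add: dsc_paths_of_size_def)
  then have pos: "\<forall>v\<in>set vs. 0 < card (snd v)" and "vs \<noteq> []"
    using card_pos_if_dsc_path[OF path] by (auto simp: dsc_path_def)
  then show "fst (hd (adsc_expand vs)) = \<alpha> \<and>
      cact I \<delta> (fst (last (adsc_expand vs))) (fst (snd (last (adsc_expand vs)))) = Some \<beta> \<longleftrightarrow>
    fst (hd vs) = \<alpha> \<and> cact I \<delta> (fst (last vs)) (snd (last vs)) = Some \<beta>"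
    using hd_adsc_expand[OF pos] last_adsc_expand[OF pos] by simp
qed

theorem proposition4:
  fixes I :: "('a::finite) rel" and \<delta> :: "'a \<Rightarrow> ('s::finite) \<Rightarrow> 's option"
  assumes "concurrent_system I \<delta>"
  shows "(\<forall>h\<ge>1. \<exists>f. bij_betw f (executions_height I \<delta> h) (dsc_paths I \<delta> h))
       \<and> (\<forall>n\<ge>1. \<exists>f. bij_betw f (executions_length I \<delta> n) (adsc_full_paths I \<delta> n))
       \<and> (\<forall>n\<ge>1. \<forall>\<alpha> \<beta>. \<exists>f. bij_betw f (executions_from_to I \<delta> n \<alpha> \<beta>)
                                      (adsc_full_paths_from_to I \<delta> n \<alpha> \<beta>))"
proof (intro conjI allI impI)
  fix h :: nat assume "1 \<le> h"
  show "\<exists>f. bij_betw f (executions_height I \<delta> h) (dsc_paths I \<delta> h)"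
    using bij_betw_the_inv_into[OF dsc_paths_bij_executions_height[OF assms \<open>1 \<le> h\<close>]] by blast
next
  fix n :: nat assume "1 \<le> n"
  have "bij_betw (the_inv_into (dsc_paths_of_size I \<delta> n) (path_execution I))
      (executions_length I \<delta> n) (dsc_paths_of_size I \<delta> n)"
    using bij_betw_the_inv_into[OF dsc_paths_of_size_bij_executions_length[OF assms \<open>1 \<le> n\<close>]] .
  from bij_betw_trans[OF this dsc_paths_of_size_bij_adsc_full_paths]
  show "\<exists>f. bij_betw f (executions_length I \<delta> n) (adsc_full_paths I \<delta> n)" by blast
next
  fix n :: nat and \<alpha> \<beta> assume "1 \<le> n"
  from bij_betw_trans[OF executions_from_to_bij
      bij_betw_trans[OF bij_betw_the_inv_into[OF dsc_paths_from_to_bij_executions[OF assms \<open>1 \<le> n\<close>]]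
        dsc_paths_from_to_bij_adsc_full_paths]]
  show "\<exists>f. bij_betw f (executions_from_to I \<delta> n \<alpha> \<beta>) (adsc_full_paths_from_to I \<delta> n \<alpha> \<beta>)" by blast
qed

end
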